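(* Let $I=\langle N,M,V\rangle$ be an ordered instance of chores with $n$ agents and $m=n+c$ chores for some integer $c>0$, and let $c'=c-1$. Assume there exists an integer $n_{c'}>0$ such that every instance of chores with $n'\ge n_{c'}$ agents and $m'=n'+c'$ chores has an MMS allocation, and that $n>n_{c'}$. If some agent $i\in N$ has an MMS partition in which at least $n-2$ bundles have size less than two and at least $n-1$ bundles have size less than three, then $I$ has an MMS allocation.
   Context: An instance of chores $I=\langle N,M,V\rangle$ has agents $N=\{1,\dots,n\}$, chores $M=\{1,\dots,m\}$ and additive valuations $v_i$ with $v_i(\emptyset)=0$, $v_i(S)=\sum_{g\in S}v_i(\{g\})$ and $v_{ij}:=v_i(\{j\})\le 0$. It is ordered if $v_{ij}\le v_{i(j+1)}$ for all $i$ and $1\le j<m$. An allocation ($n$-partition) is an ordered $n$-tuple of pairwise disjoint, possibly empty subsets of $M$ with union $M$. The maximin share of $i$ is $\mu_i=\max_A\min_j v_i(A_j)$ over all allocations; an MMS partition of $i$ is an allocation $A$ with $v_i(A_j)\ge\mu_i$ for all $j$; an MMS allocation is an allocation with $v_i(A_i)\ge\mu_i$ for all $i$. The size of a bundle is its cardinality. *)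

theory Defs
  imports Complex_Main
begin

(* An instance with n agents {1..n} and m chores {1..m}; v i j is the value of chore j
   for agent i (additive valuations are determined by the single-item values). *)

definition val :: "(nat \<Rightarrow> nat \<Rightarrow> real) \<Rightarrow> nat \<Rightarrow> nat set \<Rightarrow> real" where
  "val v i S = (\<Sum>g\<in>S. v i g)"

definition chores_inst :: "nat \<Rightarrow> nat \<Rightarrow> (nat \<Rightarrow> nat \<Rightarrow> real) \<Rightarrow> bool" where
  "chores_inst n m v \<longleftrightarrow> (\<forall>i\<in>{1..n}. \<forall>j\<in>{1..m}. v i j \<le> 0)"

definition ordered_inst :: "nat \<Rightarrow> nat \<Rightarrow> (nat \<Rightarrow> nat \<Rightarrow> real) \<Rightarrow> bool" where
  "ordered_inst n m v \<longleftrightarrow> (\<forall>i\<in>{1..n}. \<forall>j. 1 \<le> j \<and> j < m \<longrightarrow> v i j \<le> v i (j + 1))"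

definition is_alloc :: "nat \<Rightarrow> nat \<Rightarrow> (nat \<Rightarrow> nat set) \<Rightarrow> bool" where
  "is_alloc n m A \<longleftrightarrow>
     (\<forall>i\<in>{1..n}. A i \<subseteq> {1..m}) \<and>
     (\<forall>i\<in>{1..n}. \<forall>j\<in>{1..n}. i \<noteq> j \<longrightarrow> A i \<inter> A j = {}) \<and>
     (\<Union>i\<in>{1..n}. A i) = {1..m}"

definition min_val :: "nat \<Rightarrow> (nat \<Rightarrow> nat \<Rightarrow> real) \<Rightarrow> nat \<Rightarrow> (nat \<Rightarrow> nat set) \<Rightarrow> real" where
  "min_val n v i A = Min ((\<lambda>j. val v i (A j)) ` {1..n})"

definition mms :: "nat \<Rightarrow> nat \<Rightarrow> (nat \<Rightarrow> nat \<Rightarrow> real) \<Rightarrow> nat \<Rightarrow> real" where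
  "mms n m v i = Max {min_val n v i A | A. is_alloc n m A}"

definition mms_partition :: "nat \<Rightarrow> nat \<Rightarrow> (nat \<Rightarrow> nat \<Rightarrow> real) \<Rightarrow> nat \<Rightarrow> (nat \<Rightarrow> nat set) \<Rightarrow> bool" where
  "mms_partition n m v i A \<longleftrightarrow> is_alloc n m A \<and> (\<forall>j\<in>{1..n}. val v i (A j) \<ge> mms n m v i)"

definition mms_alloc :: "nat \<Rightarrow> nat \<Rightarrow> (nat \<Rightarrow> nat \<Rightarrow> real) \<Rightarrow> (nat \<Rightarrow> nat set) \<Rightarrow> bool" where
  "mms_alloc n m v A \<longleftrightarrow> is_alloc n m A \<and> (\<forall>i\<in>{1..n}. val v i (A i) \<ge> mms n m v i)"

end

(*
  Take agent i's MMS partition P. The size conditions provide two bundles P L and P j0 with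
  |P j0| <= 2 outside of which at most n - 2 chores remain. If some other agent a accepts P j0,
  give P L to i, P j0 to a and the remaining chores one by one to the other agents: for chores,
  a bundle of at most one chore always meets the maximin share. Otherwise P j0 = {x, y} is
  rejected by every other agent and i takes it. For every other agent x and y lie in different
  bundles of its MMS partition (together they are worth less than its share), so merging these
  two bundles after removing x and y gives an (n - 1)-partition of the remaining chores with the
  same guarantee. Hence the reduced instance, with n - 1 agents and (n - 1) + (c - 1) chores,
  has maximin shares at least as large, and its MMS allocation completes the allocation.
*)
theory Submission
  imports Defs "HOL-Library.Disjoint_Sets"
begin

(* Unlike partition_on, bundles are indexed by agents and may be empty. *)
definition alloc_on :: "'i set \<Rightarrow> 'c set \<Rightarrow> ('i \<Rightarrow> 'c set) \<Rightarrow> bool" where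
  "alloc_on I Y A \<longleftrightarrow> disjoint_family_on A I \<and> (\<Union>a\<in>I. A a) = Y"

lemma is_alloc_iff_alloc_on: "is_alloc n m A \<longleftrightarrow> alloc_on {1..n} {1..m} A"
  unfolding is_alloc_def alloc_on_def disjoint_family_on_def by blast

lemma alloc_on_subset: "alloc_on I Y A \<Longrightarrow> a \<in> I \<Longrightarrow> A a \<subseteq> Y"
  unfolding alloc_on_def by blast

lemma alloc_on_disjoint: "alloc_on I Y A \<Longrightarrow> a \<in> I \<Longrightarrow> b \<in> I \<Longrightarrow> a \<noteq> b \<Longrightarrow> A a \<inter> A b = {}"
  unfolding alloc_on_def disjoint_family_on_def by blast

lemma alloc_on_union:
  assumes "alloc_on S U A" "alloc_on S' U' A'" "S \<inter> S' = {}" "U \<inter> U' = {}"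
  shows "alloc_on (S \<union> S') (U \<union> U') (\<lambda>a. if a \<in> S then A a else A' a)"
proof -
  have "A a \<inter> A' b = {}" "A' b \<inter> A a = {}" if "a \<in> S" "b \<in> S'" for a b
    using that assms(4) alloc_on_subset[OF assms(1)] alloc_on_subset[OF assms(2)] by blast+
  then show ?thesis
    using assms(1-3) unfolding alloc_on_def disjoint_family_on_def by (auto; blast)
qed

lemma alloc_on_transport:
  assumes "alloc_on I Y A" "bij_betw \<sigma> I' I" "bij_betw \<tau> Y Y'"
  shows "alloc_on I' Y' (\<lambda>a. \<tau> ` A (\<sigma> a))"
  unfolding alloc_on_def
proof
  show "disjoint_family_on (\<lambda>a. \<tau> ` A (\<sigma> a)) I'"
    unfolding disjoint_family_on_def
  proof (intro ballI impI)
    fix a b assume ab: "a \<in> I'" "b \<in> I'" "a \<noteq> b"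
    have "\<sigma> a \<in> I" "\<sigma> b \<in> I" "\<sigma> a \<noteq> \<sigma> b"
      using ab assms(2) by (auto simp: bij_betw_def inj_on_def)
    then have "A (\<sigma> a) \<inter> A (\<sigma> b) = {}" "A (\<sigma> a) \<subseteq> Y" "A (\<sigma> b) \<subseteq> Y"
      using alloc_on_disjoint[OF assms(1)] alloc_on_subset[OF assms(1)] by auto
    moreover have "inj_on \<tau> Y" using assms(3) by (simp add: bij_betw_def)
    ultimately show "\<tau> ` A (\<sigma> a) \<inter> \<tau> ` A (\<sigma> b) = {}"
      by (metis image_empty inj_on_image_Int)
  qed
  have "(\<Union>a\<in>I'. \<tau> ` A (\<sigma> a)) = \<tau> ` (\<Union>b\<in>\<sigma> ` I'. A b)" by blast
  also have "\<dots> = Y'" using assms by (simp add: alloc_on_def bij_betw_def)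
  finally show "(\<Union>a\<in>I'. \<tau> ` A (\<sigma> a)) = Y'" .
qed

lemma alloc_on_singletons:
  assumes "finite Y" "finite I" "card Y \<le> card I"
  obtains A where "alloc_on I Y A" "\<forall>a\<in>I. card (A a) \<le> 1"
proof -
  obtain f where f: "f ` Y \<subseteq> I" "inj_on f Y" using card_le_inj[OF assms] by blast
  define A where "A a = {y\<in>Y. f y = a}" for a
  have "alloc_on I Y A" using f(1) unfolding alloc_on_def disjoint_family_on_def A_def by auto
  moreover have "card (A a) \<le> 1" for a
    using f(2) assms(1) unfolding A_def inj_on_def by (auto simp: card_le_Suc0_iff_eq)
  ultimately show thesis using that by blast
qed

lemma alloc_on_merge:
  assumes "alloc_on I Y Q" "k \<in> I" "l \<in> I" "k \<noteq> l" "x \<in> Q k" "y \<in> Q l"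
  shows "alloc_on (I - {l}) (Y - {x, y}) (Q(k := (Q k - {x}) \<union> (Q l - {y})))"
    (is "alloc_on _ _ ?R")
  unfolding alloc_on_def
proof
  have disj: "Q j \<inter> Q j' = {}" if "j \<in> I" "j' \<in> I" "j \<noteq> j'" for j j'
    using alloc_on_disjoint[OF assms(1) that] .
  show "disjoint_family_on ?R (I - {l})"
    unfolding disjoint_family_on_def
  proof (intro ballI impI)
    fix j j' assume "j \<in> I - {l}" "j' \<in> I - {l}" "j \<noteq> j'"
    then show "?R j \<inter> ?R j' = {}"
      using disj assms(2,3) by (cases "j = k"; cases "j' = k") auto
  qed
  have "x \<notin> Q j" if "j \<in> I" "j \<noteq> k" for j using disj that assms(2,5) by blast
  moreover have "y \<notin> Q j" if "j \<in> I" "j \<noteq> l" for j using disj that assms(3,6) by blast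
  moreover have "(\<Union>j\<in>I. Q j) = Y" using assms(1) unfolding alloc_on_def by blast
  ultimately show "(\<Union>j\<in>I - {l}. ?R j) = Y - {x, y}"
    using assms(2-4) by auto
qed

lemma card_UN_le_card_index:
  assumes "finite I" "\<forall>a\<in>I. card (A a) \<le> 1"
  shows "card (\<Union>a\<in>I. A a) \<le> card I"
proof -
  have "card (\<Union>a\<in>I. A a) \<le> (\<Sum>a\<in>I. card (A a))" by (rule card_UN_le[OF assms(1)])
  also have "\<dots> \<le> (\<Sum>a\<in>I. 1)" using assms(2) by (intro sum_mono) auto
  finally show ?thesis by simp
qed

lemma val_antimono:
  assumes "finite S" "S' \<subseteq> S" "\<forall>g\<in>S. v a g \<le> 0"
  shows "val v a S \<le> val v a S'"
proof -
  have "val v a S = val v a (S - S') + val v a S'"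
    unfolding val_def by (rule sum.subset_diff[OF assms(2,1)])
  moreover have "val v a (S - S') \<le> 0" unfolding val_def using assms(3) by (intro sum_nonpos) auto
  ultimately show ?thesis by simp
qed

lemma finite_min_vals:
  assumes "1 \<le> n"
  shows "finite {min_val n v a A |A. is_alloc n m A}"
proof (rule finite_subset)
  show "{min_val n v a A |A. is_alloc n m A} \<subseteq> val v a ` Pow {1..m}"
  proof
    fix x assume "x \<in> {min_val n v a A |A. is_alloc n m A}"
    then obtain A where A: "is_alloc n m A" "x = min_val n v a A" by blast
    have "x \<in> (\<lambda>j. val v a (A j)) ` {1..n}"
      unfolding A(2) min_val_def using assms by (intro Min_in) auto
    then obtain j where "j \<in> {1..n}" "x = val v a (A j)" by blast
    moreover have "A j \<subseteq> {1..m}" using A(1) \<open>j \<in> {1..n}\<close> unfolding is_alloc_def by blast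
    ultimately show "x \<in> val v a ` Pow {1..m}" by blast
  qed
qed simp

lemma mms_geI:
  assumes "1 \<le> n" "is_alloc n m A" "\<forall>j\<in>{1..n}. t \<le> val v a (A j)"
  shows "t \<le> mms n m v a"
proof -
  have "t \<le> min_val n v a A" unfolding min_val_def using assms by (subst Min_ge_iff) auto
  also have "\<dots> \<le> mms n m v a" unfolding mms_def
    using assms(2) by (intro Max_ge[OF finite_min_vals[OF assms(1)]]) blast
  finally show ?thesis .
qed

lemma mms_partition_exists:
  assumes "1 \<le> n"
  obtains Q where "mms_partition n m v a Q"
proof -
  have "is_alloc n m (\<lambda>j. if j = 1 then {1..m} else {})" unfolding is_alloc_def using assms by auto
  then have "mms n m v a \<in> {min_val n v a A |A. is_alloc n m A}"
    unfolding mms_def by (intro Max_in[OF finite_min_vals[OF assms]]) blast+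
  then obtain Q where "is_alloc n m Q" "mms n m v a = min_val n v a Q" by blast
  then have "mms_partition n m v a Q" unfolding mms_partition_def min_val_def by auto
  then show thesis by (rule that)
qed

lemma mms_le_val_if_card_le_1:
  assumes "chores_inst n m v" "1 \<le> n" "a \<in> {1..n}" "S \<subseteq> {1..m}" "card S \<le> 1"
  shows "mms n m v a \<le> val v a S"
proof -
  obtain Q where Q: "is_alloc n m Q" "\<forall>j\<in>{1..n}. mms n m v a \<le> val v a (Q j)"
    using mms_partition_exists[OF assms(2)] unfolding mms_partition_def by blast
  obtain k where k: "k \<in> {1..n}" "S \<subseteq> Q k"
  proof (cases "S = {}")
    case True
    then show thesis using that[of 1] assms(2) by simp
  next
    case False
    then have "card S = 1"
      using assms(4,5) by (metis One_nat_def card_0_eq finite_atLeastAtMost finite_subset le_Suc_eq le_zero_eq)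
    then obtain g where "S = {g}" by (rule card_1_singletonE)
    moreover have "g \<in> (\<Union>j\<in>{1..n}. Q j)" using assms(4) Q(1) \<open>S = {g}\<close> unfolding is_alloc_def by auto
    ultimately show thesis using that by blast
  qed
  have "Q k \<subseteq> {1..m}" using Q(1) k(1) unfolding is_alloc_def by blast
  then have "val v a (Q k) \<le> val v a S"
    using assms(1,3) k(2) unfolding chores_inst_def by (intro val_antimono) (auto intro: finite_subset)
  then show ?thesis using Q(2) k(1) by fastforce
qed

lemma mms_ge_of_alloc_on:
  assumes "alloc_on K Y R" "card K = n'" "1 \<le> n'" "bij_betw \<tau> {1..m'} Y"
    and "\<forall>j\<in>{1..m'}. v' p j = w (\<tau> j)" "\<forall>k\<in>K. t \<le> sum w (R k)"
  shows "t \<le> mms n' m' v' p"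
proof -
  have "finite K" using assms(2,3) card.infinite by force
  then obtain \<rho> where \<rho>: "bij_betw \<rho> {1..n'} K"
    using ex_bij_betw_nat_finite_1 assms(2) by blast
  let ?\<tau>' = "inv_into {1..m'} \<tau>"
  have \<tau>': "bij_betw ?\<tau>' Y {1..m'}" using bij_betw_inv_into[OF assms(4)] .
  define A where "A q = ?\<tau>' ` R (\<rho> q)" for q
  have "is_alloc n' m' A"
    unfolding is_alloc_iff_alloc_on A_def by (rule alloc_on_transport[OF assms(1) \<rho> \<tau>'])
  moreover have "t \<le> val v' p (A q)" if "q \<in> {1..n'}" for q
  proof -
    have \<rho>q: "\<rho> q \<in> K" using bij_betw_apply[OF \<rho> that] .
    have RY: "R (\<rho> q) \<subseteq> Y" using alloc_on_subset[OF assms(1) \<rho>q] .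
    then have "inj_on ?\<tau>' (R (\<rho> q))" using \<tau>' inj_on_subset unfolding bij_betw_def by blast
    then have "val v' p (A q) = (\<Sum>g\<in>R (\<rho> q). v' p (?\<tau>' g))"
      unfolding val_def A_def by (simp add: sum.reindex)
    also have "\<dots> = sum w (R (\<rho> q))"
    proof (rule sum.cong)
      fix g assume "g \<in> R (\<rho> q)"
      then have "g \<in> Y" using RY by blast
      then show "v' p (?\<tau>' g) = w g"
        using assms(4,5) bij_betw_apply[OF \<tau>'] by (simp add: bij_betw_inv_into_right)
    qed simp
    finally show ?thesis using assms(6) \<rho>q by simp
  qed
  ultimately show ?thesis using mms_geI assms(3) by blast
qed

lemma mms_le_mms_remove_pair:
  assumes ci: "chores_inst n m v" and a: "a \<in> {1..n}" and "2 \<le> n"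
    and xy: "x \<in> {1..m}" "y \<in> {1..m}" "x \<noteq> y"
    and rejected: "v a x + v a y < mms n m v a"
    and \<tau>: "bij_betw \<tau> {1..m'} ({1..m} - {x, y})"
    and v': "\<forall>j\<in>{1..m'}. v' p j = v a (\<tau> j)"
  shows "mms n m v a \<le> mms (n - 1) m' v' p"
proof -
  let ?\<mu> = "mms n m v a"
  have "1 \<le> n" using \<open>2 \<le> n\<close> by simp
  then obtain Q where "mms_partition n m v a Q" by (rule mms_partition_exists)
  then have Q: "alloc_on {1..n} {1..m} Q" "\<forall>j\<in>{1..n}. ?\<mu> \<le> val v a (Q j)"
    unfolding mms_partition_def is_alloc_iff_alloc_on by auto
  obtain k l where kl: "k \<in> {1..n}" "x \<in> Q k" "l \<in> {1..n}" "y \<in> Q l"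
    using xy(1,2) Q(1) unfolding alloc_on_def by blast
  have Qfin: "finite (Q j)" if "j \<in> {1..n}" for j
    using alloc_on_subset[OF Q(1) that] finite_subset by blast
  have "k \<noteq> l"
  proof
    assume "k = l"
    have "\<forall>g\<in>Q k. v a g \<le> 0"
      using alloc_on_subset[OF Q(1) kl(1)] ci a unfolding chores_inst_def by blast
    then have "val v a (Q k) \<le> val v a {x, y}"
      using kl \<open>k = l\<close> Qfin by (intro val_antimono) auto
    also have "\<dots> = v a x + v a y" using xy(3) by (simp add: val_def)
    finally show False using Q(2) kl(1) rejected by fastforce
  qed
  let ?R = "Q(k := (Q k - {x}) \<union> (Q l - {y}))"
  have R: "alloc_on ({1..n} - {l}) ({1..m} - {x, y}) ?R"
    using alloc_on_merge[OF Q(1) kl(1,3) \<open>k \<noteq> l\<close> kl(2,4)] .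
  have card_R: "card ({1..n} - {l}) = n - 1" "1 \<le> n - 1" using kl(3) \<open>2 \<le> n\<close> by auto
  have "\<forall>j\<in>{1..n} - {l}. ?\<mu> \<le> sum (v a) (?R j)"
  proof
    fix j assume j: "j \<in> {1..n} - {l}"
    show "?\<mu> \<le> sum (v a) (?R j)"
    proof (cases "j = k")
      case True
      have "(Q k - {x}) \<inter> (Q l - {y}) = {}"
        using alloc_on_disjoint[OF Q(1) kl(1,3) \<open>k \<noteq> l\<close>] by blast
      then have "sum (v a) (?R j) = (val v a (Q k) - v a x) + (val v a (Q l) - v a y)"
        using True kl Qfin by (simp add: val_def sum.union_disjoint sum_diff1)
      moreover have "?\<mu> \<le> val v a (Q k)" "?\<mu> \<le> val v a (Q l)" using Q(2) kl by auto
      ultimately show ?thesis using rejected by linarith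
    qed (use Q(2) j in \<open>auto simp: val_def\<close>)
  qed
  then show ?thesis by (rule mms_ge_of_alloc_on[where w = "v a" and v' = v' and p = p, OF R card_R \<tau> v'])
qed

lemma obtain_two_indices_others_le_1:
  fixes f :: "'a \<Rightarrow> nat"
  assumes fin: "finite I" and "2 \<le> card I"
    and lt2: "card I - 2 \<le> card {j\<in>I. f j < 2}" and lt3: "card I - 1 \<le> card {j\<in>I. f j < 3}"
  obtains L j0 where "L \<in> I" "j0 \<in> I" "L \<noteq> j0" "f j0 \<le> 2" "\<forall>j\<in>I - {L, j0}. f j \<le> 1"
proof -
  have "I \<noteq> {}" using \<open>2 \<le> card I\<close> by auto
  then obtain L where L: "L \<in> I" "\<forall>j\<in>I. f j \<le> f L"
    using Max_in[of "f ` I"] Max_ge[of "f ` I"] fin by fastforce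
  have le2: "f j \<le> 2" if j: "j \<in> I - {L}" for j
  proof (rule ccontr)
    assume "\<not> f j \<le> 2"
    then have "{j\<in>I. f j < 3} \<subseteq> I - {L, j}" using L(2) j by fastforce
    then have "card {j\<in>I. f j < 3} \<le> card (I - {L, j})"
      using fin by (intro card_mono) auto
    also have "\<dots> = card I - 2" using L(1) j fin by (auto simp: card_Diff_subset)
    finally have "card {j\<in>I. f j < 3} \<le> card I - 2" .
    then show False using lt3 \<open>2 \<le> card I\<close> by linarith
  qed
  let ?D = "I - {L} - {j\<in>I. f j < 2}"
  have "card ?D \<le> 1"
  proof (cases "f L < 2")
    case True
    then have "?D = {}" using L(2) by fastforce
    then show ?thesis by (metis card.empty zero_le_one)
  next
    case False
    then have "card ?D = card (I - {L}) - card {j\<in>I. f j < 2}"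
      using fin by (intro card_Diff_subset) auto
    then show ?thesis using lt2 L(1) fin by simp
  qed
  moreover have "I - {L} \<noteq> {}"
  proof
    assume "I - {L} = {}"
    then have "card I \<le> card {L}" using fin by (intro card_mono) auto
    then show False using \<open>2 \<le> card I\<close> by simp
  qed
  ultimately obtain j0 where j0: "j0 \<in> I - {L}" "?D \<subseteq> {j0}"
  proof (cases "?D = {}")
    case False
    with \<open>card ?D \<le> 1\<close> have "card ?D = 1" using fin by (simp add: le_Suc_eq)
    then obtain d where "?D = {d}" by (rule card_1_singletonE)
    then show thesis using that[of d] by blast
  qed blast
  show thesis
  proof (rule that[OF L(1) _ _ le2[OF j0(1)]])
    show "j0 \<in> I" "L \<noteq> j0" using j0(1) by auto
    show "\<forall>j\<in>I - {L, j0}. f j \<le> 1" using j0(2) by auto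
  qed
qed

lemma obtain_two_bundles_rest_le:
  assumes "alloc_on I Y P" "finite I" "finite Y" "2 \<le> card I"
    and "card I - 2 \<le> card {j\<in>I. card (P j) < 2}" "card I - 1 \<le> card {j\<in>I. card (P j) < 3}"
  obtains L j0 where "L \<in> I" "j0 \<in> I" "L \<noteq> j0" "card (P j0) \<le> 2"
    "card (Y - (P L \<union> P j0)) \<le> card I - 2"
proof -
  obtain L j0 where Lj0: "L \<in> I" "j0 \<in> I" "L \<noteq> j0" "card (P j0) \<le> 2"
    and small: "\<forall>j\<in>I - {L, j0}. card (P j) \<le> 1"
    using obtain_two_indices_others_le_1[of I "\<lambda>j. card (P j)"] assms(2,4-6) by blast
  have "Y - (P L \<union> P j0) \<subseteq> (\<Union>j\<in>I - {L, j0}. P j)"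
    using assms(1) unfolding alloc_on_def by blast
  moreover have "(\<Union>j\<in>I - {L, j0}. P j) \<subseteq> Y" using assms(1) unfolding alloc_on_def by blast
  ultimately have "card (Y - (P L \<union> P j0)) \<le> card (\<Union>j\<in>I - {L, j0}. P j)"
    using assms(3) by (intro card_mono) (auto intro: finite_subset)
  also have "\<dots> \<le> card (I - {L, j0})" using card_UN_le_card_index assms(2) small by blast
  also have "\<dots> = card I - 2" using Lj0(1-3) assms(2) by (auto simp: card_Diff_subset)
  finally show thesis using that Lj0 by blast
qed

lemma mms_alloc_iff_alloc_on:
  "mms_alloc n m v A \<longleftrightarrow> alloc_on {1..n} {1..m} A \<and> (\<forall>a\<in>{1..n}. mms n m v a \<le> val v a (A a))"
  unfolding mms_alloc_def is_alloc_iff_alloc_on ..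

lemma exists_mms_alloc_extend_singletons:
  assumes ci: "chores_inst n m v" and "1 \<le> n"
    and A: "alloc_on S U A" "S \<subseteq> {1..n}" "U \<subseteq> {1..m}" "\<forall>a\<in>S. mms n m v a \<le> val v a (A a)"
    and rest: "card ({1..m} - U) \<le> card ({1..n} - S)"
  shows "\<exists>A. mms_alloc n m v A"
proof -
  obtain F where F: "alloc_on ({1..n} - S) ({1..m} - U) F" "\<forall>a\<in>{1..n} - S. card (F a) \<le> 1"
    using alloc_on_singletons[OF _ _ rest] by blast
  have "alloc_on (S \<union> ({1..n} - S)) (U \<union> ({1..m} - U)) (\<lambda>a. if a \<in> S then A a else F a)"
    by (rule alloc_on_union[OF A(1) F(1)]) auto
  moreover have "S \<union> ({1..n} - S) = {1..n}" "U \<union> ({1..m} - U) = {1..m}" using A(2,3) by auto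
  moreover have "mms n m v a \<le> val v a (F a)" if "a \<in> {1..n} - S" for a
    using mms_le_val_if_card_le_1[OF ci \<open>1 \<le> n\<close>] alloc_on_subset[OF F(1) that] F(2) that by blast
  ultimately show ?thesis using A(4) unfolding mms_alloc_iff_alloc_on by auto
qed

lemma exists_mms_alloc_if_pair_rejected:
  assumes ci: "chores_inst n m v" and "2 \<le> n" and i: "i \<in> {1..n}"
    and xy: "x \<in> {1..m}" "y \<in> {1..m}" "x \<noteq> y"
    and accepted: "mms n m v i \<le> val v i {x, y}"
    and rejected: "\<forall>a\<in>{1..n} - {i}. val v a {x, y} < mms n m v a"
    and reduced: "\<forall>v'. chores_inst (n - 1) (m - 2) v' \<longrightarrow> (\<exists>A. mms_alloc (n - 1) (m - 2) v' A)"
  shows "\<exists>A. mms_alloc n m v A"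
proof -
  let ?Y = "{1..m} - {x, y}"
  have "card ?Y = m - 2" using xy by (simp add: card_Diff_subset)
  then obtain \<tau> where \<tau>: "bij_betw \<tau> {1..m - 2} ?Y"
    using ex_bij_betw_nat_finite_1[of ?Y] by auto
  have "card ({1..n} - {i}) = n - 1" using i by simp
  then obtain \<sigma> where \<sigma>: "bij_betw \<sigma> {1..n - 1} ({1..n} - {i})"
    using ex_bij_betw_nat_finite_1[of "{1..n} - {i}"] by auto
  define v' where "v' p j = v (\<sigma> p) (\<tau> j)" for p j
  have "chores_inst (n - 1) (m - 2) v'"
    using ci bij_betw_apply[OF \<sigma>] bij_betw_apply[OF \<tau>] unfolding chores_inst_def v'_def by blast
  then obtain A' where A': "alloc_on {1..n - 1} {1..m - 2} A'"
    "\<forall>p\<in>{1..n - 1}. mms (n - 1) (m - 2) v' p \<le> val v' p (A' p)"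
    using reduced unfolding mms_alloc_iff_alloc_on by blast
  let ?\<sigma>' = "inv_into {1..n - 1} \<sigma>"
  define F where "F a = \<tau> ` A' (?\<sigma>' a)" for a
  have "alloc_on ({1..n} - {i}) ?Y F"
    unfolding F_def by (rule alloc_on_transport[OF A'(1) bij_betw_inv_into[OF \<sigma>] \<tau>])
  then have "alloc_on ({i} \<union> ({1..n} - {i})) ({x, y} \<union> ?Y) (\<lambda>a. if a \<in> {i} then {x, y} else F a)"
    by (intro alloc_on_union) (auto simp: alloc_on_def disjoint_family_on_def)
  moreover have "{i} \<union> ({1..n} - {i}) = {1..n}" "{x, y} \<union> ?Y = {1..m}" using i xy by auto
  moreover have "mms n m v a \<le> val v a (F a)" if a: "a \<in> {1..n} - {i}" for a
  proof -
    define p where "p = ?\<sigma>' a"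
    have p: "p \<in> {1..n - 1}" "\<sigma> p = a"
      unfolding p_def using bij_betw_apply[OF bij_betw_inv_into[OF \<sigma>] a] bij_betw_inv_into_right[OF \<sigma> a]
      by auto
    have "A' p \<subseteq> {1..m - 2}" using alloc_on_subset[OF A'(1) p(1)] .
    then have "inj_on \<tau> (A' p)" using \<tau> inj_on_subset unfolding bij_betw_def by blast
    then have "val v a (F a) = val v' p (A' p)"
      unfolding F_def val_def v'_def p_def[symmetric] p(2) by (simp add: sum.reindex)
    moreover have "mms n m v a \<le> mms (n - 1) (m - 2) v' p"
    proof (rule mms_le_mms_remove_pair[OF ci _ \<open>2 \<le> n\<close> xy _ \<tau>])
      show "a \<in> {1..n}" using a by blast
      show "v a x + v a y < mms n m v a" using rejected a xy(3) by (simp add: val_def)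
      show "\<forall>j\<in>{1..m - 2}. v' p j = v a (\<tau> j)" unfolding v'_def p(2) by simp
    qed
    ultimately show ?thesis using A'(2) p(1) by fastforce
  qed
  ultimately show ?thesis using accepted unfolding mms_alloc_iff_alloc_on by auto
qed

lemma exists_mms_alloc_of_two_bundles:
  assumes ci: "chores_inst n m v" and "2 \<le> n" and i: "i \<in> {1..n}"
    and B: "B1 \<subseteq> {1..m}" "B2 \<subseteq> {1..m}" "B1 \<inter> B2 = {}" "card B2 \<le> 2"
    and accepted: "mms n m v i \<le> val v i B1" "mms n m v i \<le> val v i B2"
    and rest: "card ({1..m} - (B1 \<union> B2)) \<le> n - 2"
    and reduced: "\<forall>v'. chores_inst (n - 1) (m - 2) v' \<longrightarrow> (\<exists>A. mms_alloc (n - 1) (m - 2) v' A)"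
  shows "\<exists>A. mms_alloc n m v A"
proof (cases "\<exists>a\<in>{1..n} - {i}. mms n m v a \<le> val v a B2")
  case True
  then obtain a where a: "a \<in> {1..n} - {i}" "mms n m v a \<le> val v a B2" by blast
  have "alloc_on {i, a} (B1 \<union> B2) (\<lambda>b. if b = i then B1 else B2)"
    using B(3) a(1) unfolding alloc_on_def disjoint_family_on_def by auto
  moreover have "card ({1..n} - {i, a}) = n - 2" using a(1) i by (auto simp: card_Diff_subset)
  ultimately show ?thesis
    using exists_mms_alloc_extend_singletons[OF ci, of "{i, a}" "B1 \<union> B2"] \<open>2 \<le> n\<close> i a B(1,2)
      accepted(1) rest by auto
next
  case False
  then have rejected: "\<forall>a\<in>{1..n} - {i}. val v a B2 < mms n m v a" by (auto simp: not_le)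
  have "(if i = 1 then 2 else 1) \<in> {1..n} - {i}" using \<open>2 \<le> n\<close> by auto
  then obtain a where a: "a \<in> {1..n} - {i}" by blast
  have "\<not> card B2 \<le> 1"
  proof
    assume "card B2 \<le> 1"
    then have "mms n m v a \<le> val v a B2"
      using mms_le_val_if_card_le_1[OF ci _ _ B(2)] a \<open>2 \<le> n\<close> by simp
    then show False using bspec[OF rejected a] by linarith
  qed
  then have "card B2 = 2" using B(4) by simp
  then obtain x y where xy: "B2 = {x, y}" "x \<noteq> y" by (auto simp: card_2_iff)
  show ?thesis
  proof (rule exists_mms_alloc_if_pair_rejected[OF ci \<open>2 \<le> n\<close> i _ _ xy(2) _ _ reduced])
    show "x \<in> {1..m}" "y \<in> {1..m}" using B(2) xy(1) by auto
  qed (use accepted(2) rejected xy(1) in auto)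
qed

theorem lemma20:
  fixes n m c nc :: nat and v :: "nat \<Rightarrow> nat \<Rightarrow> real"
  assumes "chores_inst n m v" and "ordered_inst n m v"
    and "c > 0" and "m = n + c"
    and "nc > 0"
    and "\<forall>n' v'. n' \<ge> nc \<longrightarrow> chores_inst n' (n' + (c - 1)) v'
                 \<longrightarrow> (\<exists>A. mms_alloc n' (n' + (c - 1)) v' A)"
    and "n > nc"
    and "i \<in> {1..n}" and "mms_partition n m v i P"
    and "card {j\<in>{1..n}. card (P j) < 2} \<ge> n - 2"
    and "card {j\<in>{1..n}. card (P j) < 3} \<ge> n - 1"
  shows "\<exists>A. mms_alloc n m v A"
proof -
  have "2 \<le> n" using assms(5,7) by linarith
  have P: "alloc_on {1..n} {1..m} P" "\<forall>j\<in>{1..n}. mms n m v i \<le> val v i (P j)"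
    using assms(9) unfolding mms_partition_def is_alloc_iff_alloc_on by auto
  obtain L j0 where L: "L \<in> {1..n}" "j0 \<in> {1..n}" "L \<noteq> j0" "card (P j0) \<le> 2"
    and rest: "card ({1..m} - (P L \<union> P j0)) \<le> n - 2"
    using obtain_two_bundles_rest_le[OF P(1)] \<open>2 \<le> n\<close> assms(10,11) by auto
  have "nc \<le> n - 1" "n - 1 + (c - 1) = m - 2" using assms(3,4,7) by auto
  then have reduced: "\<forall>v'. chores_inst (n - 1) (m - 2) v' \<longrightarrow> (\<exists>A. mms_alloc (n - 1) (m - 2) v' A)"
    using assms(6) by metis
  show ?thesis
  proof (rule exists_mms_alloc_of_two_bundles[OF assms(1) \<open>2 \<le> n\<close> assms(8) _ _ _ L(4) _ _ rest reduced])
    show "P L \<subseteq> {1..m}" "P j0 \<subseteq> {1..m}" using alloc_on_subset[OF P(1)] L(1,2) by auto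
    show "P L \<inter> P j0 = {}" using alloc_on_disjoint[OF P(1) L(1-3)] .
  qed (use P(2) L(1,2) in auto)
qed

end
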